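(* Let $r\ge1$, $n\ge1$ and $k\ge1$ be integers, and let $\mathcal P(n,r,1)$ be the set of lattice paths with steps $U=(1,1)$ and $D=(1,-r)$ from $(0,0)$ to $((r+1)n+1,1)$ (so with $rn+1$ up steps and $n$ down steps). Then (whenever the denominators are nonzero): (1) The number of paths in $\mathcal P(n,r,1)$ with $k-1$ peaks that start with a down step and end with an up step and have exactly $j$ peaks on or below the $x$-axis is $\frac1k\binom{rn}{k-1}\binom{n-1}{k-1}$, for each $j=0,1,\dots,k-1$. (2) The number of paths in $\mathcal P(n,r,1)$ with $k-1$ valleys that start with an up step and end with a down step and have exactly $j$ valleys on or below the $x$-axis is $\frac1k\binom{rn}{k-1}\binom{n-1}{k-1}$, for each $j=0,1,\dots,k-1$. (3) The number of paths in $\mathcal P(n,r,1)$ with $rn-k$ double rises that start with an up step and end with an up step and have exactly $j$ double rises on or below the $x$-axis is $\frac{1}{rn-k+1}\binom{rn}{k}\binom{n-1}{k-1}$, for each $j=0,1,\dots,rn-k$. (4) The number of paths in $\mathcal P(n,r,1)$ with $n-k-1$ double falls that start with a down step and end with a down step and have exactly $j$ double falls on or below the $x$-axis is $\frac{1}{n-k}\binom{rn}{k-1}\binom{n-1}{k}$, for each $j=0,1,\dots,n-k-1$. (5) The number of paths in $\mathcal P(n,r,1)$ with $k$ peaks that start with an up step and have exactly $j$ up steps starting on or below the $x$-axis is $\frac{1}{rn+1}\binom{rn+1}{k}\binom{n-1}{k-1}$, for each $j=1,2,\dots,rn+1$. (6) The number of paths in $\mathcal P(n,r,1)$ with $k$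 valleys that start with a down step and have exactly $j$ down steps starting on or below the $x$-axis is $\frac1n\binom{rn}{k-1}\binom{n}{k}$, for each $j=1,2,\dots,n$.
   Context: Writing a path as a word in $U,D$: a peak is an occurrence of two consecutive steps $UD$, a valley an occurrence of $DU$, a double rise an occurrence of $UU$, a double fall an occurrence of $DD$; such an occurrence lies on or below the $x$-axis if the vertex between its two steps has $y$-coordinate $\le0$. A step starts on or below the $x$-axis if its initial vertex has $y$-coordinate $\le0$. *)

theory Defs
  imports Complex_Main
begin

datatype step = U | D

text \<open>Lattice paths with steps U=(1,1), D=(1,-r) from (0,0) to ((r+1)n+1,1),
  encoded as words in U, D.\<close>
definition paths :: "nat \<Rightarrow> nat \<Rightarrow> step list set" where
  "paths n r = {w. length w = (r+1)*n+1 \<and> count_list w U = r*n+1 \<and> count_list w D = n}"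

definition ht :: "nat \<Rightarrow> step list \<Rightarrow> nat \<Rightarrow> int" where
  "ht r w i = int (count_list (take i w) U) - int r * int (count_list (take i w) D)"

text \<open>Number of occurrences of the factor a b (peak: U D, valley: D U,
  double rise: U U, double fall: D D).\<close>
definition occ :: "step \<Rightarrow> step \<Rightarrow> step list \<Rightarrow> nat" where
  "occ a b w = card {i. Suc i < length w \<and> w ! i = a \<and> w ! Suc i = b}"

definition occ_low :: "nat \<Rightarrow> step \<Rightarrow> step \<Rightarrow> step list \<Rightarrow> nat" where
  "occ_low r a b w = card {i. Suc i < length w \<and> w ! i = a \<and> w ! Suc i = b \<and> ht r w (Suc i) \<le> 0}"

definition steps_low :: "nat \<Rightarrow> step \<Rightarrow> step list \<Rightarrow> nat" where
  "steps_low r a w = card {i. i < length w \<and> w ! i = a \<and> ht r w i \<le> 0}"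

end

theory Submission
  imports Defs
begin

text \<open>
  Counting: a word in U, D is determined by its first letter and the lengths of its runs, and the
  numbers of U-runs and D-runs are fixed by the number of peaks and the first and last letters.
  Hence the paths with prescribed first and last step and number of peaks are counted by a product
  of two numbers of compositions, i.e. of two binomial coefficients.

  Equidistribution is a cycle lemma. Since a path of P(n,r,1) ends at height 1, rotating it
  to start at vertex s shifts all heights by a constant (plus 1 on the wrapped-around part). Order
  the vertices by height, ties broken by decreasing index: then a vertex of the rotated path lies on
  or below the x-axis iff it precedes s in this order, or is s itself. So among the rotations of a
  path that start at one of its c marked vertices, the number of the other marked vertices on or
  below the axis takes every value 0, ..., c - 1 exactly once. Double counting over the rotation classes shows
  that all these values are attained equally often.
\<close>

section \<open>Peaks, valleys and runs\<close>

instance step :: finite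
proof
  have "(UNIV :: step set) \<subseteq> {U, D}"
    using step.exhaust by blast
  then show "finite (UNIV :: step set)"
    by (rule finite_subset) simp
qed

lemma step_neq_iff: "x \<noteq> y \<longleftrightarrow> (x = U \<and> y = D) \<or> (x = D \<and> y = U)"
  by (cases x; cases y) auto

lemma finite_lists_length: "finite {xs :: 'a::finite list. length xs = m}"
  using finite_lists_length_eq[OF finite_UNIV, of m] by simp

lemma length_eq_count_U_D: "length w = count_list w U + count_list w D"
proof (induction w)
  case (Cons x w) then show ?case by (cases x) auto
qed simp

lemma occ_Nil [simp]: "occ a b [] = 0"
  by (simp add: occ_def)

lemma occ_singleton [simp]: "occ a b [x] = 0"
  by (simp add: occ_def)

lemma occ_Cons_Cons:
  "occ a b (x # y # w) = (if x = a \<and> y = b then 1 else 0) + occ a b (y # w)"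
proof -
  let ?A = "\<lambda>w. {i. Suc i < length w \<and> w ! i = a \<and> w ! Suc i = b}"
  have "?A (x # y # w) = (if x = a \<and> y = b then {0} else {}) \<union> Suc ` ?A (y # w)"
  proof (rule set_eqI)
    fix i
    show "i \<in> ?A (x # y # w) \<longleftrightarrow> i \<in> (if x = a \<and> y = b then {0} else {}) \<union> Suc ` ?A (y # w)"
      by (cases i) auto
  qed
  moreover have "finite (?A (y # w))"
    by (rule finite_subset[of _ "{..<length (y # w)}"]) auto
  ultimately show ?thesis
    by (auto simp: occ_def card_image)
qed

lemma occ_Cons: "w \<noteq> [] \<Longrightarrow> occ a b (x # w) = (if x = a \<and> hd w = b then 1 else 0) + occ a b w"
  by (cases w) (auto simp: occ_Cons_Cons)

lemma count_list_eq_occ_last: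
  "a \<noteq> b \<Longrightarrow> w \<noteq> [] \<Longrightarrow> occ a a w + occ a b w + (if last w = a then 1 else 0) = count_list w a"
proof (induction w)
  case (Cons x w)
  then show ?case
    by (cases "w = []") (auto simp: occ_Cons step_neq_iff split: if_splits)
qed simp

lemma count_list_eq_occ_hd:
  "a \<noteq> b \<Longrightarrow> w \<noteq> [] \<Longrightarrow> occ a a w + occ b a w + (if hd w = a then 1 else 0) = count_list w a"
proof (induction w)
  case (Cons x w)
  then show ?case
    by (cases "w = []") (auto simp: occ_Cons step_neq_iff hd_conv_nth split: if_splits)
qed simp

lemma occ_peaks_valleys:
  "w \<noteq> [] \<Longrightarrow> occ U D w + (if last w = U then 1 else 0) = occ D U w + (if hd w = U then 1 else 0)"
  using count_list_eq_occ_last[of U D w] count_list_eq_occ_hd[of U D w] by simp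

definition compositions :: "nat \<Rightarrow> nat \<Rightarrow> nat" where
  "compositions N m = (if N = 0 then (if m = 0 then 1 else 0) else if m = 0 then 0 else (N - 1) choose (m - 1))"

lemma compositions_0_left [simp]: "compositions 0 m = (if m = 0 then 1 else 0)"
  by (simp add: compositions_def)

lemma compositions_Suc_0 [simp]: "compositions (Suc N) 0 = 0"
  by (simp add: compositions_def)

lemma compositions_eq_choose: "0 < N \<Longrightarrow> 0 < m \<Longrightarrow> compositions N m = (N - 1) choose (m - 1)"
  by (simp add: compositions_def)

lemma compositions_Suc:
  "compositions (Suc N) m = (if m = 0 then 0 else compositions N m + compositions N (m - 1))"
  by (cases N; cases m) (auto simp: compositions_def choose_reduce_nat)

definition words :: "step \<Rightarrow> step \<Rightarrow> nat \<Rightarrow> nat \<Rightarrow> nat \<Rightarrow> step list set" where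
  "words x y a b p = {w. w \<noteq> [] \<and> hd w = x \<and> last w = y \<and>
     count_list w U = a \<and> count_list w D = b \<and> occ U D w = p}"

lemma finite_words: "finite (words x y a b p)"
  by (rule finite_subset[OF _ finite_lists_length[of "a + b"]])
    (auto simp: words_def length_eq_count_U_D)

lemma words_U_0: "words U y 0 b p = {}"
  by (auto simp: words_def neq_Nil_conv)

lemma words_D_0: "words D y a 0 p = {}"
  by (auto simp: words_def neq_Nil_conv)

lemma words_U_Suc: "words U y (Suc a) b p =
   (if y = U \<and> a = 0 \<and> b = 0 \<and> p = 0 then {[U]} else {}) \<union> Cons U ` words U y a b p
   \<union> (if p > 0 then Cons U ` words D y a b (p - 1) else {})"
proof (rule set_eqI)
  fix w
  show "w \<in> words U y (Suc a) b p \<longleftrightarrow> w \<in> (if y = U \<and> a = 0 \<and> b = 0 \<and> p = 0 then {[U]} else {})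
     \<union> Cons U ` words U y a b p \<union> (if p > 0 then Cons U ` words D y a b (p - 1) else {})"
  proof (cases w rule: remdups_adj.cases)
    case (3 x z v)
    then show ?thesis
      by (cases z) (auto simp: words_def occ_Cons_Cons)
  qed (auto simp: words_def)
qed

lemma words_D_Suc: "words D y a (Suc b) p =
   (if y = D \<and> a = 0 \<and> b = 0 \<and> p = 0 then {[D]} else {}) \<union> Cons D ` words D y a b p
   \<union> Cons D ` words U y a b p"
proof (rule set_eqI)
  fix w
  show "w \<in> words D y a (Suc b) p \<longleftrightarrow> w \<in> (if y = D \<and> a = 0 \<and> b = 0 \<and> p = 0 then {[D]} else {})
     \<union> Cons D ` words D y a b p \<union> Cons D ` words U y a b p"
  proof (cases w rule: remdups_adj.cases)
    case (3 x z v)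
    then show ?thesis
      by (cases z) (auto simp: words_def occ_Cons_Cons)
  qed (auto simp: words_def)
qed

lemma card_Cons_image: "card (Cons x ` A) = card A"
  by (rule card_image) simp

lemma Cons_words_disjoint: "x \<noteq> x' \<Longrightarrow> Cons z ` words x y a b p \<inter> Cons z ` words x' y' a' b' p' = {}"
  by (auto simp: words_def)

lemma singleton_notin_Cons_words: "[z] \<notin> Cons z' ` words x y a b p"
  by (auto simp: words_def)

lemma card_words_U_Suc: "card (words U y (Suc a) b p) =
   (if y = U \<and> a = 0 \<and> b = 0 \<and> p = 0 then 1 else 0) + card (words U y a b p)
   + (if p > 0 then card (words D y a b (p - 1)) else 0)"
  by (simp add: words_U_Suc card_Un_disjoint finite_words card_Cons_image Cons_words_disjoint
      singleton_notin_Cons_words)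

lemma card_words_D_Suc: "card (words D y a (Suc b) p) =
   (if y = D \<and> a = 0 \<and> b = 0 \<and> p = 0 then 1 else 0) + card (words D y a b p) + card (words U y a b p)"
  by (simp add: words_D_Suc card_Un_disjoint finite_words card_Cons_image Cons_words_disjoint
      singleton_notin_Cons_words)

text \<open>The U's of such a word form \<open>p + [y = U]\<close> runs and its D's \<open>p + [x = D]\<close> runs.\<close>

lemma card_words: "a + b > 0 \<Longrightarrow> card (words x y a b p) =
   compositions a (p + (if y = U then 1 else 0)) * compositions b (p + (if x = D then 1 else 0))"
proof (induction "a + b" arbitrary: a b x y p rule: less_induct)
  case less
  have empty_0: "compositions a' 0 * compositions b' 0 = 0" if "a' + b' > 0" for a' b'
    using that by (cases a'; cases b') auto
  show ?case
  proof (cases x)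
    case U
    show ?thesis
    proof (cases a)
      case 0 then show ?thesis using U less.prems by (cases b) (simp_all add: words_U_0)
    next
      case (Suc a')
      show ?thesis
      proof (cases "a' + b = 0")
        case True
        then show ?thesis
          using U Suc card_words_U_Suc[of y 0 0 p] by (cases y) (simp_all add: words_U_0 words_D_0 compositions_Suc)
      next
        case False
        then have "card (words U y a b p) =
            card (words U y a' b p) + (if p > 0 then card (words D y a' b (p - 1)) else 0)"
          using Suc False card_words_U_Suc[of y a' b p] by auto
        also have "\<dots> = compositions a' (p + (if y = U then 1 else 0)) * compositions b p
            + (if p > 0 then compositions a' (p - 1 + (if y = U then 1 else 0)) * compositions b p else 0)"
          using Suc False less.hyps[of a' b] by simp
        finally have "card (words U y a b p) = \<dots>" .
        then show ?thesis
          using U Suc empty_0[of a' b] False by (cases p) (auto simp: compositions_Suc algebra_simps)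
      qed
    qed
  next
    case D
    show ?thesis
    proof (cases b)
      case 0 then show ?thesis using D less.prems by (cases a) (simp_all add: words_D_0)
    next
      case (Suc b')
      show ?thesis
      proof (cases "a + b' = 0")
        case True
        then show ?thesis
          using D Suc card_words_D_Suc[of y 0 0 p] by (cases y) (simp_all add: words_U_0 words_D_0 compositions_Suc)
      next
        case False
        then have "card (words D y a b p) = card (words D y a b' p) + card (words U y a b' p)"
          using Suc False card_words_D_Suc[of y a b' p] by auto
        also have "\<dots> = compositions a (p + (if y = U then 1 else 0)) * compositions b' (Suc p)
            + compositions a (p + (if y = U then 1 else 0)) * compositions b' p"
          using Suc False less.hyps[of a b'] by simp
        finally have "card (words D y a b p) = \<dots>" .
        then show ?thesis
          using D Suc by (simp add: compositions_Suc distrib_left)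
      qed
    qed
  qed
qed

section \<open>Counting paths by their pattern statistics\<close>

lemma paths_length: "w \<in> paths n r \<Longrightarrow> length w = (r+1)*n+1"
  by (simp add: paths_def)

lemma paths_nonempty: "w \<in> paths n r \<Longrightarrow> w \<noteq> []"
  by (auto simp: paths_def)

lemma paths_ht_length: "w \<in> paths n r \<Longrightarrow> ht r w (length w) = 1"
  by (simp add: paths_def ht_def)

lemma paths_count_list: "w \<in> paths n r \<Longrightarrow> count_list w U = r*n+1 \<and> count_list w D = n"
  by (simp add: paths_def)

lemma finite_paths: "finite (paths n r)"
  by (rule finite_subset[OF _ finite_lists_length[of "(r+1)*n+1"]]) (auto simp: paths_def)

lemma words_eq_paths:
  "words x y (r*n+1) n p = {w \<in> paths n r. hd w = x \<and> last w = y \<and> occ U D w = p}"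
  by (auto simp: words_def paths_def length_eq_count_U_D)

lemma card_paths_hd_last_peaks:
  "card {w \<in> paths n r. hd w = x \<and> last w = y \<and> occ U D w = p} =
     compositions (r*n+1) (p + (if y = U then 1 else 0)) * compositions n (p + (if x = D then 1 else 0))"
  unfolding words_eq_paths[symmetric] by (rule card_words) simp

lemma card_paths_D_U_peaks: "n \<ge> 1 \<Longrightarrow> k \<ge> 1 \<Longrightarrow>
  card {w \<in> paths n r. occ U D w = k - 1 \<and> hd w = D \<and> last w = U} = (r*n choose (k-1)) * ((n-1) choose (k-1))"
  using card_paths_hd_last_peaks[of n r D U "k - 1"]
  by (simp add: compositions_eq_choose conj_ac)

lemma card_paths_U_D_valleys: "n \<ge> 1 \<Longrightarrow> k \<ge> 1 \<Longrightarrow>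
  card {w \<in> paths n r. occ D U w = k - 1 \<and> hd w = U \<and> last w = D} = (r*n choose (k-1)) * ((n-1) choose (k-1))"
proof -
  assume "n \<ge> 1" "k \<ge> 1"
  have "occ D U w = k - 1 \<longleftrightarrow> occ U D w = k" if "w \<in> paths n r" "hd w = U" "last w = D" for w
    using occ_peaks_valleys[of w] paths_nonempty[OF that(1)] that \<open>k \<ge> 1\<close> by auto
  then have "{w \<in> paths n r. occ D U w = k - 1 \<and> hd w = U \<and> last w = D} =
      {w \<in> paths n r. hd w = U \<and> last w = D \<and> occ U D w = k}"
    by blast
  then show ?thesis
    using card_paths_hd_last_peaks[of n r U D k] \<open>n \<ge> 1\<close> \<open>k \<ge> 1\<close> by (simp add: compositions_eq_choose)
qed

lemma card_paths_U_U_double_rises: "n \<ge> 1 \<Longrightarrow> k \<ge> 1 \<Longrightarrow> k \<le> r*n \<Longrightarrow>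
  card {w \<in> paths n r. occ U U w = r*n - k \<and> hd w = U \<and> last w = U} = (r*n choose k) * ((n-1) choose (k-1))"
proof -
  assume "n \<ge> 1" "k \<ge> 1" "k \<le> r*n"
  have "occ U U w + occ U D w = r*n" if "w \<in> paths n r" "last w = U" for w
    using count_list_eq_occ_last[of U D w] paths_nonempty[of w] paths_count_list[of w] that by simp
  then have "occ U U w = r*n - k \<longleftrightarrow> occ U D w = k" if "w \<in> paths n r" "last w = U" for w
    using that \<open>k \<le> r*n\<close> by fastforce
  then have "{w \<in> paths n r. occ U U w = r*n - k \<and> hd w = U \<and> last w = U} =
      {w \<in> paths n r. hd w = U \<and> last w = U \<and> occ U D w = k}"
    by blast
  then show ?thesis
    using card_paths_hd_last_peaks[of n r U U k] \<open>n \<ge> 1\<close> \<open>k \<ge> 1\<close> by (simp add: compositions_eq_choose)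
qed

lemma card_paths_D_D_double_falls: "n \<ge> 1 \<Longrightarrow> k \<ge> 1 \<Longrightarrow> k + 1 \<le> n \<Longrightarrow>
  card {w \<in> paths n r. occ D D w = n - k - 1 \<and> hd w = D \<and> last w = D} = (r*n choose (k-1)) * ((n-1) choose k)"
proof -
  assume "n \<ge> 1" "k \<ge> 1" "k + 1 \<le> n"
  have "occ D D w + occ U D w + 1 = n" if "w \<in> paths n r" "hd w = D" "last w = D" for w
    using count_list_eq_occ_last[of D U w] occ_peaks_valleys[of w] paths_nonempty[of w]
      paths_count_list[of w] that by simp
  then have "occ D D w = n - k - 1 \<longleftrightarrow> occ U D w = k" if "w \<in> paths n r" "hd w = D" "last w = D" for w
    using that \<open>k + 1 \<le> n\<close> by fastforce
  then have "{w \<in> paths n r. occ D D w = n - k - 1 \<and> hd w = D \<and> last w = D} =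
      {w \<in> paths n r. hd w = D \<and> last w = D \<and> occ U D w = k}"
    by blast
  then show ?thesis
    using card_paths_hd_last_peaks[of n r D D k] \<open>n \<ge> 1\<close> \<open>k \<ge> 1\<close> by (simp add: compositions_eq_choose)
qed

lemma card_paths_split_last:
  "card {w \<in> paths n r. P w} =
     card {w \<in> paths n r. P w \<and> last w = U} + card {w \<in> paths n r. P w \<and> last w = D}"
proof -
  have "{w \<in> paths n r. P w} = {w \<in> paths n r. P w \<and> last w = U} \<union> {w \<in> paths n r. P w \<and> last w = D}"
    using step.exhaust by blast
  then show ?thesis
    by (simp add: card_Un_disjoint finite_paths disjoint_iff)
qed

lemma binomial_Suc_left: "0 < k \<Longrightarrow> Suc N choose k = (N choose (k - 1)) + (N choose k)"
  by (cases k) simp_all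

lemma card_paths_U_peaks: "n \<ge> 1 \<Longrightarrow> k \<ge> 1 \<Longrightarrow>
  card {w \<in> paths n r. occ U D w = k \<and> hd w = U} = ((r*n+1) choose k) * ((n-1) choose (k-1))"
proof -
  assume "n \<ge> 1" "k \<ge> 1"
  have "card {w \<in> paths n r. occ U D w = k \<and> hd w = U} =
      card {w \<in> paths n r. hd w = U \<and> last w = U \<and> occ U D w = k} +
      card {w \<in> paths n r. hd w = U \<and> last w = D \<and> occ U D w = k}"
    using card_paths_split_last[of n r "\<lambda>w. occ U D w = k \<and> hd w = U"] by (simp add: conj_ac)
  also have "\<dots> = (r*n choose k) * ((n-1) choose (k-1)) + (r*n choose (k-1)) * ((n-1) choose (k-1))"
    using card_paths_hd_last_peaks[of n r U U k] card_paths_hd_last_peaks[of n r U D k] \<open>n \<ge> 1\<close> \<open>k \<ge> 1\<close>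
    by (simp add: compositions_eq_choose)
  also have "\<dots> = ((r*n choose k) + (r*n choose (k-1))) * ((n-1) choose (k-1))"
    by (simp add: add_mult_distrib)
  also have "(r*n choose k) + (r*n choose (k-1)) = (r*n+1) choose k"
    using \<open>k \<ge> 1\<close> by (simp add: binomial_Suc_left)
  finally show ?thesis .
qed

lemma card_paths_D_valleys: "n \<ge> 1 \<Longrightarrow> k \<ge> 1 \<Longrightarrow>
  card {w \<in> paths n r. occ D U w = k \<and> hd w = D} = (r*n choose (k-1)) * (n choose k)"
proof -
  assume "n \<ge> 1" "k \<ge> 1"
  have valleys: "occ D U w = occ U D w + (if last w = U then 1 else 0)" if "w \<in> paths n r" "hd w = D" for w
    using occ_peaks_valleys[of w] paths_nonempty[of w] that by simp
  have "{w \<in> paths n r. (occ D U w = k \<and> hd w = D) \<and> last w = U} =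
      {w \<in> paths n r. hd w = D \<and> last w = U \<and> occ U D w = k - 1}"
    using valleys \<open>k \<ge> 1\<close> by auto
  moreover have "{w \<in> paths n r. (occ D U w = k \<and> hd w = D) \<and> last w = D} =
      {w \<in> paths n r. hd w = D \<and> last w = D \<and> occ U D w = k}"
    using valleys by auto
  ultimately have "card {w \<in> paths n r. occ D U w = k \<and> hd w = D} =
      card {w \<in> paths n r. hd w = D \<and> last w = U \<and> occ U D w = k - 1} +
      card {w \<in> paths n r. hd w = D \<and> last w = D \<and> occ U D w = k}"
    using card_paths_split_last[of n r "\<lambda>w. occ D U w = k \<and> hd w = D"] by simp
  also have "\<dots> = (r*n choose (k-1)) * ((n-1) choose (k-1)) + (r*n choose (k-1)) * ((n-1) choose k)"
    using card_paths_hd_last_peaks[of n r D U "k - 1"] card_paths_hd_last_peaks[of n r D D k]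
      \<open>n \<ge> 1\<close> \<open>k \<ge> 1\<close> by (simp add: compositions_eq_choose)
  also have "\<dots> = (r*n choose (k-1)) * (((n-1) choose (k-1)) + ((n-1) choose k))"
    by (simp add: add_mult_distrib2)
  also have "((n-1) choose (k-1)) + ((n-1) choose k) = n choose k"
    using binomial_Suc_left[of k "n - 1"] \<open>n \<ge> 1\<close> \<open>k \<ge> 1\<close> by simp
  finally show ?thesis .
qed

section \<open>Rotations of a path\<close>

lemma count_list_rotate [simp]: "count_list (rotate s w) x = count_list w x"
  by (metis append_take_drop_id add.commute count_list_append rotate_drop_take)

lemma rotate_mem_paths: "w \<in> paths n r \<Longrightarrow> rotate s w \<in> paths n r"
  by (simp add: paths_def)

lemma add_mod_eq_if: "(s::nat) < L \<Longrightarrow> i < L \<Longrightarrow> (s + i) mod L = (if s + i < L then s + i else s + i - L)"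
  by (simp add: mod_if)

lemma card_rotate_index:
  assumes "(s::nat) < L"
  shows "card {i. i < L \<and> P ((s + i) mod L)} = card {q. q < L \<and> P q}"
proof -
  let ?f = "\<lambda>i. (s + i) mod L"
  have inj: "inj_on ?f {i. i < L \<and> P (?f i)}"
  proof (rule inj_onI)
    fix i j assume "i \<in> {i. i < L \<and> P (?f i)}" "j \<in> {i. i < L \<and> P (?f i)}" "?f i = ?f j"
    then show "i = j"
      using add_mod_eq_if[OF assms, of i] add_mod_eq_if[OF assms, of j] by (auto split: if_splits)
  qed
  have image: "?f ` {i. i < L \<and> P (?f i)} = {q. q < L \<and> P q}"
  proof (intro equalityI subsetI)
    fix q assume q: "q \<in> {q. q < L \<and> P q}"
    define i where "i = (if s \<le> q then q - s else q + L - s)"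
    have "i < L" "q = ?f i"
      using assms q by (auto simp: i_def add_mod_eq_if)
    then show "q \<in> ?f ` {i. i < L \<and> P (?f i)}"
      using q by (intro image_eqI[of q _ i]) simp_all
  next
    fix q assume "q \<in> ?f ` {i. i < L \<and> P (?f i)}"
    then obtain i where "P (?f i)" "q = ?f i" by blast
    then show "q \<in> {q. q < L \<and> P q}"
      using assms by simp
  qed
  show ?thesis
    using card_image[OF inj] image by simp
qed

lemma take_rotate:
  assumes "s < length w" "i \<le> length w"
  shows "take i (rotate s w) =
    (if s + i \<le> length w then take i (drop s w) else drop s w @ take (s + i - length w) w)"
  using assms by (auto simp: rotate_drop_take min_def add.commute)

lemma count_list_take_rotate:
  assumes "s < length w" "i \<le> length w"
  shows "int (count_list (take i (rotate s w)) x) =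
    (if s + i \<le> length w then int (count_list (take (s + i) w) x) - int (count_list (take s w) x)
     else int (count_list (take (s + i - length w) w) x) + int (count_list w x) - int (count_list (take s w) x))"
proof -
  have "count_list w x = count_list (take s w) x + count_list (drop s w) x"
    by (metis append_take_drop_id count_list_append)
  moreover have "take (s + i) w = take s w @ take i (drop s w)"
    by (simp add: take_add)
  ultimately show ?thesis
    using assms by (simp add: take_rotate)
qed

lemma ht_0 [simp]: "ht r w 0 = 0"
  by (simp add: ht_def)

text \<open>
  Height of vertex q of w in the rotation of w that starts at vertex s; the extra 1 on the
  wrapped-around part is the final height of w.
\<close>

definition ht_from :: "nat \<Rightarrow> step list \<Rightarrow> nat \<Rightarrow> nat \<Rightarrow> int" where
  "ht_from r w s q = ht r w q - ht r w s + (if q < s then 1 else 0)"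

lemma ht_rotate:
  assumes "ht r w (length w) = 1" "s < length w" "i < length w"
  shows "ht r (rotate s w) i = ht_from r w s ((s + i) mod length w)"
proof -
  have "ht r (rotate s w) i = (if s + i \<le> length w then ht r w (s + i) - ht r w s
      else ht r w (s + i - length w) + ht r w (length w) - ht r w s)"
    using count_list_take_rotate[of s w i U] count_list_take_rotate[of s w i D] assms(2,3)
    by (auto simp: ht_def algebra_simps)
  then show ?thesis
    using assms by (auto simp: ht_from_def add_mod_eq_if)
qed

text \<open>Encodes as one integer the order of the vertices by height, ties broken by decreasing index.\<close>

definition vertex_key :: "nat \<Rightarrow> step list \<Rightarrow> nat \<Rightarrow> int" where
  "vertex_key r w q = ht r w q * int (length w) - int q"

lemma vertex_key_less_iff:
  assumes "q < length w" "s < length w"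
  shows "vertex_key r w q < vertex_key r w s \<longleftrightarrow>
    ht r w q < ht r w s \<or> (ht r w q = ht r w s \<and> s < q)"
proof -
  define L where "L = int (length w)"
  have gap: "h * L + L \<le> g * L" if "h < g" for h g
  proof -
    have "(h + 1) * L \<le> g * L"
      using that by (intro mult_right_mono) (auto simp: L_def)
    then show ?thesis by (simp add: algebra_simps)
  qed
  have "int q < L" "int s < L"
    using assms by (auto simp: L_def)
  then show ?thesis
    using gap[of "ht r w q" "ht r w s"] gap[of "ht r w s" "ht r w q"]
    unfolding vertex_key_def L_def[symmetric] by (cases "ht r w q" "ht r w s" rule: linorder_cases) auto
qed

lemma inj_on_vertex_key: "inj_on (vertex_key r w) {..<length w}"
proof (rule inj_onI)
  fix q s assume "q \<in> {..<length w}" "s \<in> {..<length w}" "vertex_key r w q = vertex_key r w s"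
  then show "q = s"
    using vertex_key_less_iff[of q w s r] vertex_key_less_iff[of s w q r] by (auto simp: not_less_iff_gr_or_eq)
qed

lemma ht_from_nonpos_iff:
  assumes "q < length w" "s < length w"
  shows "ht_from r w s q \<le> 0 \<longleftrightarrow> q = s \<or> vertex_key r w q < vertex_key r w s"
  using vertex_key_less_iff[OF assms, of r] by (auto simp: ht_from_def)

definition cyclic_pred :: "nat \<Rightarrow> nat \<Rightarrow> nat" where
  "cyclic_pred L q = (if q = 0 then L - 1 else q - 1)"

lemma nth_rotate_pred:
  assumes "s < length w" "0 < j" "j < length w"
  shows "rotate s w ! (j - 1) = w ! cyclic_pred (length w) ((s + j) mod length w)"
proof -
  have "(s + (j - 1)) mod length w = cyclic_pred (length w) ((s + j) mod length w)"
    using assms add_mod_eq_if[of s "length w" "j - 1"] add_mod_eq_if[of s "length w" j]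
    by (auto simp: cyclic_pred_def)
  then show ?thesis
    using assms by (simp add: nth_rotate)
qed

lemma last_rotate: "s < length w \<Longrightarrow> last (rotate s w) = w ! cyclic_pred (length w) s"
proof -
  assume s: "s < length w"
  then have "rotate s w \<noteq> []" by auto
  moreover have "(s + (length w - 1)) mod length w = cyclic_pred (length w) s"
    using s add_mod_eq_if[of s "length w" "length w - 1"] by (auto simp: cyclic_pred_def)
  ultimately show ?thesis
    using s nth_rotate[of "length w - 1" w s] by (simp add: last_conv_nth)
qed

lemma hd_rotate: "s < length w \<Longrightarrow> hd (rotate s w) = w ! s"
proof -
  assume s: "s < length w"
  then have "w \<noteq> []" by auto
  then show ?thesis
    using s by (simp add: hd_rotate_conv_nth)
qed

lemma card_rotate_steps:
  assumes "ht r w (length w) = 1" "s < length w"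
  shows "card {i. i < length w \<and> P (rotate s w ! i) (ht r (rotate s w) i)} =
    card {q. q < length w \<and> P (w ! q) (ht_from r w s q)}"
proof -
  have "{i. i < length w \<and> P (rotate s w ! i) (ht r (rotate s w) i)} =
      {i. i < length w \<and> P (w ! ((s + i) mod length w)) (ht_from r w s ((s + i) mod length w))}"
    using assms by (auto simp: nth_rotate ht_rotate)
  then show ?thesis
    using card_rotate_index[OF assms(2), of "\<lambda>q. P (w ! q) (ht_from r w s q)"] by simp
qed

lemma card_adjacent_rotate:
  assumes "ht r w (length w) = 1" "s < length w"
  shows "card {i. Suc i < length w \<and> P (rotate s w ! i) (rotate s w ! Suc i) (ht r (rotate s w) (Suc i))} =
    card {q. q < length w \<and> q \<noteq> s \<and> P (w ! cyclic_pred (length w) q) (w ! q) (ht_from r w s q)}"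
proof -
  let ?L = "length w"
  let ?A = "\<lambda>j. 0 < j \<and> P (rotate s w ! (j - 1)) (rotate s w ! j) (ht r (rotate s w) j)"
  let ?Q = "\<lambda>q. q \<noteq> s \<and> P (w ! cyclic_pred ?L q) (w ! q) (ht_from r w s q)"
  have pointwise: "?A j \<longleftrightarrow> ?Q ((s + j) mod ?L)" if j: "j < ?L" for j
  proof -
    have "(s + j) mod ?L = s \<longleftrightarrow> j = 0"
      using assms(2) j add_mod_eq_if[of s ?L j] by auto
    moreover have "rotate s w ! (j - 1) = w ! cyclic_pred ?L ((s + j) mod ?L)" if "0 < j"
      using nth_rotate_pred[OF assms(2) that j] .
    ultimately show ?thesis
      using assms j nth_rotate[OF j, of s] ht_rotate[OF assms j] by auto
  qed
  let ?I = "{i. Suc i < ?L \<and> P (rotate s w ! i) (rotate s w ! Suc i) (ht r (rotate s w) (Suc i))}"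
  have "Suc ` ?I = {j. j < ?L \<and> ?A j}"
    by (auto simp: image_iff gr0_conv_Suc)
  also have "\<dots> = {j. j < ?L \<and> ?Q ((s + j) mod ?L)}"
    by (simp only: pointwise cong: conj_cong)
  finally have "card ?I = card {j. j < ?L \<and> ?Q ((s + j) mod ?L)}"
    using card_image[OF inj_on_subset[OF inj_Suc subset_UNIV], of ?I] by simp
  then show ?thesis
    using card_rotate_index[OF assms(2), of ?Q] by simp
qed

section \<open>The cycle lemma\<close>

lemma card_rank_eq_1:
  fixes f :: "'a \<Rightarrow> 'b::linorder"
  assumes "finite M" "inj_on f M" "i < card M"
  shows "card {s \<in> M. card {q \<in> M. f q < f s} = i} = 1"
proof -
  define rank where "rank s = card {q \<in> M. f q < f s}" for s
  have rank_less: "rank s < card M" if "s \<in> M" for s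
  proof -
    have "{q \<in> M. f q < f s} \<subseteq> M - {s}" by auto
    then have "rank s \<le> card (M - {s})"
      unfolding rank_def by (intro card_mono) (use assms(1) in auto)
    also have "\<dots> < card M"
      using assms(1) that by (rule card_Diff1_less)
    finally show ?thesis .
  qed
  have rank_mono: "rank s < rank t" if "s \<in> M" "t \<in> M" "f s < f t" for s t
    unfolding rank_def using that assms(1) by (intro psubset_card_mono) auto
  have "inj_on rank M"
  proof (rule inj_onI)
    fix s t assume "s \<in> M" "t \<in> M" "rank s = rank t"
    then show "s = t"
      using rank_mono[of s t] rank_mono[of t s] assms(2) by (metis inj_on_def less_irrefl neq_iff)
  qed
  moreover have "rank ` M = {..<card M}"
    using rank_less card_image[OF \<open>inj_on rank M\<close>] by (intro card_subset_eq) auto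
  ultimately have "{s \<in> M. rank s = i} = {the_inv_into M rank i}"
    using assms(3) by (auto intro: the_inv_into_f_f[symmetric] simp: f_the_inv_into_f the_inv_into_into)
  then show ?thesis
    by (simp add: rank_def)
qed

lemma card_eq_mult_if_unique_rotation:
  assumes "finite T" "\<forall>w\<in>T. length w = L" "\<forall>w\<in>T. \<forall>s. rotate s w \<in> T" "S \<subseteq> T"
    and unique: "\<forall>w\<in>T. card {s \<in> {..<L}. rotate s w \<in> S} = 1"
  shows "card T = L * card S"
proof -
  have rotate_back: "rotate (L - s) (rotate s w) = w" if "s < L" "length w = L" for s :: nat and w :: "'a list"
    using that by (simp add: rotate_rotate)
  have "card {w \<in> T. rotate s w \<in> S} = card S" if "s < L" for s
  proof (rule bij_betw_same_card[of "rotate s"], rule bij_betw_byWitness[of _ "rotate (L - s)"])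
    show "\<forall>w\<in>{w \<in> T. rotate s w \<in> S}. rotate (L - s) (rotate s w) = w"
      using assms(2) rotate_back that by auto
    show "\<forall>v\<in>S. rotate s (rotate (L - s) v) = v"
      using assms(2,4) that by (auto simp: rotate_rotate)
    show "rotate s ` {w \<in> T. rotate s w \<in> S} \<subseteq> S"
      by auto
    show "rotate (L - s) ` S \<subseteq> {w \<in> T. rotate s w \<in> S}"
      using assms(2,3,4) that by (auto simp: rotate_rotate)
  qed
  then have "(\<Sum>w\<in>T. card {s \<in> {..<L}. rotate s w \<in> S}) = card S * card {..<L}"
    using assms(1) by (intro sum_multicount) auto
  then show ?thesis
    using unique by simp
qed

lemma card_eq_mult_if_rank_characterizes_rotations:
  fixes f :: "'a list \<Rightarrow> nat \<Rightarrow> 'b::linorder"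
  assumes "finite T" "\<forall>w\<in>T. length w = L" "\<forall>w\<in>T. \<forall>s. rotate s w \<in> T" "S \<subseteq> T"
    and M: "\<forall>w\<in>T. M w \<subseteq> {..<L} \<and> inj_on (f w) (M w) \<and> i < card (M w)"
    and rank: "\<forall>w\<in>T. \<forall>s<L. rotate s w \<in> S \<longleftrightarrow> s \<in> M w \<and> card {q \<in> M w. f w q < f w s} = i"
  shows "card T = L * card S"
proof (rule card_eq_mult_if_unique_rotation[OF assms(1-4)], intro ballI)
  fix w assume "w \<in> T"
  then have "{s \<in> {..<L}. rotate s w \<in> S} = {s \<in> M w. card {q \<in> M w. f w q < f w s} = i}"
    using M rank by auto
  then show "card {s \<in> {..<L}. rotate s w \<in> S} = 1"
    using M \<open>w \<in> T\<close> card_rank_eq_1[of "M w" "f w" i] finite_subset[of "M w" "{..<L}"] by simp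
qed

lemma card_fibre_mult_card:
  assumes "finite S" "finite J" "\<forall>v\<in>S. f v \<in> J" "0 < L"
    and fibres: "\<forall>i\<in>J. N = L * card {v \<in> S. f v = i}" and "j \<in> J"
  shows "card {v \<in> S. f v = j} * card J = card S"
proof -
  have fibre_j: "card {v \<in> S. f v = i} = card {v \<in> S. f v = j}" if "i \<in> J" for i
    using fibres that \<open>j \<in> J\<close> \<open>0 < L\<close> by (metis mult_left_cancel not_gr0)
  have "S = (\<Union>i\<in>J. {v \<in> S. f v = i})"
    using assms(3) by auto
  moreover have "card (\<Union>i\<in>J. {v \<in> S. f v = i}) = (\<Sum>i\<in>J. card {v \<in> S. f v = i})"
    by (rule card_UN_disjoint) (use assms(1,2) in auto)
  ultimately have "card S = (\<Sum>i\<in>J. card {v \<in> S. f v = i})"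
    by simp
  also have "\<dots> = card J * card {v \<in> S. f v = j}"
    using fibre_j by simp
  finally show ?thesis
    by simp
qed

definition cyclic_occs :: "step \<Rightarrow> step \<Rightarrow> step list \<Rightarrow> nat set" where
  "cyclic_occs a b w = {q. q < length w \<and> w ! cyclic_pred (length w) q = a \<and> w ! q = b}"

lemma finite_cyclic_occs: "finite (cyclic_occs a b w)"
  by (rule finite_subset[of _ "{..<length w}"]) (auto simp: cyclic_occs_def)

lemma occ_rotate:
  "w \<in> paths n r \<Longrightarrow> s < length w \<Longrightarrow> occ a b (rotate s w) = card (cyclic_occs a b w - {s})"
  using card_adjacent_rotate[OF paths_ht_length, of w n r s "\<lambda>x y h. x = a \<and> y = b"]
  by (simp add: occ_def cyclic_occs_def set_diff_eq conj_ac)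

lemma occ_low_rotate:
  assumes "w \<in> paths n r" "s < length w"
  shows "occ_low r a b (rotate s w) = card {q \<in> cyclic_occs a b w. vertex_key r w q < vertex_key r w s}"
proof -
  have "occ_low r a b (rotate s w) = card {q. q < length w \<and> q \<noteq> s \<and>
      w ! cyclic_pred (length w) q = a \<and> w ! q = b \<and> ht_from r w s q \<le> 0}"
    using card_adjacent_rotate[OF paths_ht_length[OF assms(1)] assms(2), of "\<lambda>x y h. x = a \<and> y = b \<and> h \<le> 0"]
    by (simp add: occ_low_def)
  also have "\<dots> = card {q \<in> cyclic_occs a b w. vertex_key r w q < vertex_key r w s}"
    using ht_from_nonpos_iff[OF _ assms(2)] by (intro arg_cong[where f = card]) (auto simp: cyclic_occs_def)
  finally show ?thesis .
qed

lemma steps_low_rotate: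
  assumes "w \<in> paths n r" "s < length w"
  shows "steps_low r a (rotate s w) =
    card {q. q < length w \<and> w ! q = a \<and> (q = s \<or> vertex_key r w q < vertex_key r w s)}"
proof -
  have "steps_low r a (rotate s w) = card {q. q < length w \<and> w ! q = a \<and> ht_from r w s q \<le> 0}"
    using card_rotate_steps[OF paths_ht_length[OF assms(1)] assms(2), of "\<lambda>x h. x = a \<and> h \<le> 0"]
    by (simp add: steps_low_def)
  also have "\<dots> = card {q. q < length w \<and> w ! q = a \<and> (q = s \<or> vertex_key r w q < vertex_key r w s)}"
    using ht_from_nonpos_iff[OF _ assms(2)] by (intro arg_cong[where f = card]) auto
  finally show ?thesis .
qed

lemma hd_last_rotate_iff:
  "s < length w \<Longrightarrow> hd (rotate s w) = b \<and> last (rotate s w) = a \<longleftrightarrow> s \<in> cyclic_occs a b w"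
  by (auto simp: hd_rotate last_rotate cyclic_occs_def)

lemma card_cyclic_occs_eq:
  assumes "w \<in> paths n r" "s < length w"
  shows "card (cyclic_occs a b w) =
    occ a b (rotate s w) + (if hd (rotate s w) = b \<and> last (rotate s w) = a then 1 else 0)"
  using occ_rotate[OF assms, of a b] hd_last_rotate_iff[OF assms(2), of b a]
    card_Suc_Diff1[OF finite_cyclic_occs, of s a b w]
  by auto

lemma card_cyclic_occs_rotate:
  assumes "w \<in> paths n r"
  shows "card (cyclic_occs a b (rotate s w)) = card (cyclic_occs a b w)"
proof -
  have L: "0 < length w"
    using paths_length[OF assms] by simp
  have "rotate s w = rotate (s mod length w) w"
    by (rule rotate_conv_mod)
  then show ?thesis
    using card_cyclic_occs_eq[OF assms, of "s mod length w" a b]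
      card_cyclic_occs_eq[OF rotate_mem_paths[OF assms, of s], of 0 a b] L by simp
qed

lemma occ_low_le_occ: "occ_low r a b v \<le> occ a b v"
  unfolding occ_low_def occ_def by (rule card_mono) (auto intro: finite_subset[of _ "{..<length v}"])

lemma card_nth_eq: "card {q. q < length w \<and> w ! q = a} = count_list w a"
  by (simp add: count_list_eq_length_filter length_filter_conv_card eq_commute)

lemma card_paths_eq_mult_occ_low_fibre:
  assumes "i < c"
  shows "card {w \<in> paths n r. card (cyclic_occs a b w) = c} =
    ((r+1)*n+1) * card {v \<in> paths n r. occ a b v = c - 1 \<and> hd v = b \<and> last v = a \<and> occ_low r a b v = i}"
proof (rule card_eq_mult_if_rank_characterizes_rotations[where M = "cyclic_occs a b" and f = "vertex_key r"])
  let ?T = "{w \<in> paths n r. card (cyclic_occs a b w) = c}"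
  let ?L = "(r+1)*n+1"
  show "finite ?T"
    by (simp add: finite_paths)
  show "\<forall>w\<in>?T. length w = ?L"
    by (auto simp: paths_length)
  show "\<forall>w\<in>?T. \<forall>s. rotate s w \<in> ?T"
    by (auto simp: rotate_mem_paths card_cyclic_occs_rotate)
  show "{v \<in> paths n r. occ a b v = c - 1 \<and> hd v = b \<and> last v = a \<and> occ_low r a b v = i} \<subseteq> ?T"
    using card_cyclic_occs_eq[of _ n r 0 a b] assms by (auto simp: paths_length)
  show "\<forall>w\<in>?T. cyclic_occs a b w \<subseteq> {..<?L} \<and> inj_on (vertex_key r w) (cyclic_occs a b w) \<and>
      i < card (cyclic_occs a b w)"
    using inj_on_vertex_key assms by (auto simp: cyclic_occs_def paths_length intro: inj_on_subset)
  show "\<forall>w\<in>?T. \<forall>s<?L. rotate s w \<in> {v \<in> paths n r. occ a b v = c - 1 \<and> hd v = b \<and> last v = a \<and> occ_low r a b v = i}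
      \<longleftrightarrow> s \<in> cyclic_occs a b w \<and> card {q \<in> cyclic_occs a b w. vertex_key r w q < vertex_key r w s} = i"
  proof (intro ballI allI impI)
    fix w s assume "w \<in> ?T" "s < ?L"
    then have w: "w \<in> paths n r" "s < length w" "card (cyclic_occs a b w) = c"
      by (auto simp: paths_length)
    show "rotate s w \<in> {v \<in> paths n r. occ a b v = c - 1 \<and> hd v = b \<and> last v = a \<and> occ_low r a b v = i}
        \<longleftrightarrow> s \<in> cyclic_occs a b w \<and> card {q \<in> cyclic_occs a b w. vertex_key r w q < vertex_key r w s} = i"
      using w rotate_mem_paths[OF w(1)] occ_rotate[OF w(1,2), of a b] occ_low_rotate[OF w(1,2), of a b]
        hd_last_rotate_iff[OF w(2), of b a] card_Diff_singleton[of s "cyclic_occs a b w"]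
      by auto
  qed
qed

lemma card_occ_low_fibre_mult:
  assumes "j < c"
  shows "card {v \<in> paths n r. occ a b v = c - 1 \<and> hd v = b \<and> last v = a \<and> occ_low r a b v = j} * c =
    card {v \<in> paths n r. occ a b v = c - 1 \<and> hd v = b \<and> last v = a}"
proof -
  define S where "S = {v \<in> paths n r. occ a b v = c - 1 \<and> hd v = b \<and> last v = a}"
  have "\<forall>v\<in>S. occ_low r a b v \<in> {..<c}"
  proof
    fix v assume "v \<in> S"
    then show "occ_low r a b v \<in> {..<c}"
      using occ_low_le_occ[of r a b v] assms by (simp add: S_def)
  qed
  moreover have "\<forall>i\<in>{..<c}. card {w \<in> paths n r. card (cyclic_occs a b w) = c} =
      ((r+1)*n+1) * card {v \<in> S. occ_low r a b v = i}"
    using card_paths_eq_mult_occ_low_fibre by (simp add: S_def conj_assoc)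
  ultimately have "card {v \<in> S. occ_low r a b v = j} * card {..<c} = card S"
    using assms by (intro card_fibre_mult_card) (auto simp: S_def finite_paths)
  then show ?thesis
    by (simp add: S_def conj_assoc)
qed

lemma steps_low_ge_1: "v \<noteq> [] \<Longrightarrow> hd v = a \<Longrightarrow> 1 \<le> steps_low r a v"
proof -
  let ?Z = "{i. i < length v \<and> v ! i = a \<and> ht r v i \<le> 0}"
  assume "v \<noteq> []" "hd v = a"
  then have "0 \<in> ?Z"
    by (simp add: hd_conv_nth)
  moreover have "finite ?Z"
    by (rule finite_subset[of _ "{..<length v}"]) auto
  ultimately show ?thesis
    unfolding steps_low_def by (metis Suc_leI card_gt_0_iff empty_iff One_nat_def)
qed

lemma steps_low_le_count_list: "steps_low r a v \<le> count_list v a"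
  unfolding steps_low_def card_nth_eq[symmetric]
  by (rule card_mono) (auto intro: finite_subset[of _ "{..<length v}"])

lemma card_paths_eq_mult_steps_low_fibre:
  assumes "y \<noteq> a" and count: "\<forall>w\<in>paths n r. count_list w a = m" and i: "1 \<le> i" "i \<le> m"
  shows "card {w \<in> paths n r. card (cyclic_occs x y w) = c} =
    ((r+1)*n+1) * card {v \<in> paths n r. occ x y v = c \<and> hd v = a \<and> steps_low r a v = i}"
proof (rule card_eq_mult_if_rank_characterizes_rotations[where M = "\<lambda>w. {q. q < length w \<and> w ! q = a}"
      and f = "vertex_key r" and i = "i - 1"])
  let ?T = "{w \<in> paths n r. card (cyclic_occs x y w) = c}"
  let ?L = "(r+1)*n+1"
  let ?M = "\<lambda>w. {q. q < length w \<and> w ! q = a}"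
  show "finite ?T"
    by (simp add: finite_paths)
  show "\<forall>w\<in>?T. length w = ?L"
    by (auto simp: paths_length)
  show "\<forall>w\<in>?T. \<forall>s. rotate s w \<in> ?T"
    by (auto simp: rotate_mem_paths card_cyclic_occs_rotate)
  show "{v \<in> paths n r. occ x y v = c \<and> hd v = a \<and> steps_low r a v = i} \<subseteq> ?T"
    using card_cyclic_occs_eq[of _ n r 0 x y] \<open>y \<noteq> a\<close> by (auto simp: paths_length)
  show "\<forall>w\<in>?T. ?M w \<subseteq> {..<?L} \<and> inj_on (vertex_key r w) (?M w) \<and> i - 1 < card (?M w)"
    using inj_on_vertex_key i count by (auto simp: paths_length card_nth_eq intro: inj_on_subset)
  show "\<forall>w\<in>?T. \<forall>s<?L. rotate s w \<in> {v \<in> paths n r. occ x y v = c \<and> hd v = a \<and> steps_low r a v = i}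
      \<longleftrightarrow> s \<in> ?M w \<and> card {q \<in> ?M w. vertex_key r w q < vertex_key r w s} = i - 1"
  proof (intro ballI allI impI)
    fix w s assume "w \<in> ?T" "s < ?L"
    then have w: "w \<in> paths n r" "s < length w" "card (cyclic_occs x y w) = c"
      by (auto simp: paths_length)
    have "{q. q < length w \<and> w ! q = a \<and> (q = s \<or> vertex_key r w q < vertex_key r w s)} =
        insert s {q \<in> ?M w. vertex_key r w q < vertex_key r w s}" if "s \<in> ?M w"
      using that by auto
    then have "s \<in> ?M w \<Longrightarrow> steps_low r a (rotate s w) = Suc (card {q \<in> ?M w. vertex_key r w q < vertex_key r w s})"
      using steps_low_rotate[OF w(1,2), of a] by simp
    moreover have "s \<in> ?M w \<Longrightarrow> occ x y (rotate s w) = c"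
      using card_cyclic_occs_eq[OF w(1,2), of x y] w(2,3) hd_rotate[OF w(2)] \<open>y \<noteq> a\<close> by auto
    moreover have "hd (rotate s w) = a \<longleftrightarrow> s \<in> ?M w"
      using hd_rotate[OF w(2)] w(2) by auto
    ultimately show "rotate s w \<in> {v \<in> paths n r. occ x y v = c \<and> hd v = a \<and> steps_low r a v = i}
        \<longleftrightarrow> s \<in> ?M w \<and> card {q \<in> ?M w. vertex_key r w q < vertex_key r w s} = i - 1"
      using rotate_mem_paths[OF w(1), of s] i by auto
  qed
qed

lemma card_steps_low_fibre_mult:
  assumes "y \<noteq> a" and count: "\<forall>w\<in>paths n r. count_list w a = m" and j: "1 \<le> j" "j \<le> m"
  shows "card {v \<in> paths n r. occ x y v = c \<and> hd v = a \<and> steps_low r a v = j} * m =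
    card {v \<in> paths n r. occ x y v = c \<and> hd v = a}"
proof -
  define S where "S = {v \<in> paths n r. occ x y v = c \<and> hd v = a}"
  have "\<forall>v\<in>S. steps_low r a v \<in> {1..m}"
    using steps_low_ge_1 steps_low_le_count_list count paths_nonempty by (auto simp: S_def)
  moreover have "\<forall>i\<in>{1..m}. card {w \<in> paths n r. card (cyclic_occs x y w) = c} =
      ((r+1)*n+1) * card {v \<in> S. steps_low r a v = i}"
    using card_paths_eq_mult_steps_low_fibre[OF assms(1,2)] by (simp add: S_def conj_assoc)
  ultimately have "card {v \<in> S. steps_low r a v = j} * card {1..m} = card S"
    using j by (intro card_fibre_mult_card) (auto simp: S_def finite_paths)
  then show ?thesis
    by (simp add: S_def conj_assoc)
qed

lemma real_eq_inverse_mult: "a * c = x * y \<Longrightarrow> 0 < c \<Longrightarrow> real a = 1 / real c * real x * real y"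
proof -
  assume "a * c = x * y" "0 < c"
  then have "real a * real c = real x * real y"
    by (metis of_nat_mult)
  then show ?thesis
    using \<open>0 < c\<close> by (simp add: field_simps)
qed

theorem theorem15:
  fixes r n k :: nat
  assumes "r \<ge> 1" "n \<ge> 1" "k \<ge> 1"
  shows
   "(\<forall>j. j \<le> k - 1 \<longrightarrow>
      real (card {w \<in> paths n r. occ U D w = k - 1 \<and> hd w = D \<and> last w = U \<and> occ_low r U D w = j})
      = 1 / real k * real (r*n choose (k-1)) * real ((n-1) choose (k-1)))
  \<and> (\<forall>j. j \<le> k - 1 \<longrightarrow>
      real (card {w \<in> paths n r. occ D U w = k - 1 \<and> hd w = U \<and> last w = D \<and> occ_low r D U w = j})
      = 1 / real k * real (r*n choose (k-1)) * real ((n-1) choose (k-1)))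
  \<and> (\<forall>j. j + k \<le> r*n \<longrightarrow>
      real (card {w \<in> paths n r. occ U U w = r*n - k \<and> hd w = U \<and> last w = U \<and> occ_low r U U w = j})
      = 1 / real (r*n - k + 1) * real (r*n choose k) * real ((n-1) choose (k-1)))
  \<and> (\<forall>j. j + k + 1 \<le> n \<longrightarrow>
      real (card {w \<in> paths n r. occ D D w = n - k - 1 \<and> hd w = D \<and> last w = D \<and> occ_low r D D w = j})
      = 1 / real (n - k) * real (r*n choose (k-1)) * real ((n-1) choose k))
  \<and> (\<forall>j. 1 \<le> j \<and> j \<le> r*n + 1 \<longrightarrow>
      real (card {w \<in> paths n r. occ U D w = k \<and> hd w = U \<and> steps_low r U w = j})
      = 1 / real (r*n + 1) * real ((r*n+1) choose k) * real ((n-1) choose (k-1)))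
  \<and> (\<forall>j. 1 \<le> j \<and> j \<le> n \<longrightarrow>
      real (card {w \<in> paths n r. occ D U w = k \<and> hd w = D \<and> steps_low r D w = j})
      = 1 / real n * real (r*n choose (k-1)) * real (n choose k))"
proof -
  have n: "n \<ge> 1" and k: "k \<ge> 1"
    using assms by auto
  have count_U: "\<forall>w\<in>paths n r. count_list w U = r*n + 1" and count_D: "\<forall>w\<in>paths n r. count_list w D = n"
    by (simp_all add: paths_def)
  show ?thesis
    apply (intro conjI allI impI)
    subgoal for j
      using card_occ_low_fibre_mult[of j k n r U D] card_paths_D_U_peaks[OF n k] k
      by (intro real_eq_inverse_mult) simp_all
    subgoal for j
      using card_occ_low_fibre_mult[of j k n r D U] card_paths_U_D_valleys[OF n k] k
      by (intro real_eq_inverse_mult) simp_all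
    subgoal for j
      using card_occ_low_fibre_mult[of j "r*n - k + 1" n r U U] card_paths_U_U_double_rises[OF n k]
      by (intro real_eq_inverse_mult) simp_all
    subgoal for j
      using card_occ_low_fibre_mult[of j "n - k" n r D D] card_paths_D_D_double_falls[OF n k]
      by (intro real_eq_inverse_mult) simp_all
    subgoal for j
      using card_steps_low_fibre_mult[of D U n r "r*n + 1" j U k] count_U card_paths_U_peaks[OF n k]
      by (intro real_eq_inverse_mult) simp_all
    subgoal for j
      using card_steps_low_fibre_mult[of U D n r n j D k] count_D card_paths_D_valleys[OF n k] n
      by (intro real_eq_inverse_mult) simp_all
    done
qed

end
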